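(* Let $\mathcal I$ be a chore allocation instance with agents $N=\{1,\dots,n\}$, chores $M$, additive valuations with $V_{ij}:=V_i(\{j\})\le0$ and $V_i(M)=-1$, and shares $s_i\in(0,1]$ summing to $1$. Let $\alpha^*$ be the optimal value of the integer program $$\min\ \alpha\quad\text{s.t.}\quad \sum_{j\in M}V_{ij}x_{ij}\ge\alpha\,\mathsf{WMMS}_i\ (\forall i),\ \ \sum_{i\in N}x_{ij}=1\ (\forall j),\ \ x_{ij}\in\{0,1\},\ \ \alpha\ge1.$$ Let $c^*=\min\{c\ge0:\ \mathcal P \text{ with } t_i=w_i=c\,\mathsf{WMMS}_i \text{ for all } i \text{ has a feasible solution}\}$, where $\mathcal P$ is the linear system in variables $x_{ij}$ ($i\in N$, $j\in M_i$), with $M_i=\{j\in M: V_{ij}\ge t_i\}$ and $N_j=\{i: j\in M_i\}$: $$\sum_{j\in M_i}V_{ij}x_{ij}\ge w_i\ (\forall i),\qquad \sum_{i\in N_j}x_{ij}=1\ (\forall j),\qquad x_{ij}\ge0.$$ Then $\alpha^*\ge c^*$.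
   Context: $\mathsf{WMMS}_i:=\max_{\langle Y_1,\dots,Y_n\rangle}\min_{k\in N}V_i(Y_k)\frac{s_i}{s_k}$, the maximum over all ordered partitions of $M$ into $n$ possibly empty bundles. $\alpha^*$ is the optimal WMMS (OWMMS) ratio: the smallest $\alpha\ge1$ for which an allocation with $V_i(X_i)\ge\alpha\,\mathsf{WMMS}_i$ for all $i$ exists. *)

theory Defs
  imports Complex_Main "HOL-Library.FuncSet"
begin

text \<open>Ordered partitions of M into bundles indexed by the agents N (possibly empty)
  are represented by assignment functions p in M ->E N; bundle Y_k = {j in M. p j = k}.\<close>

definition WMMS :: "'a set \<Rightarrow> 'b set \<Rightarrow> ('a \<Rightarrow> 'b \<Rightarrow> real) \<Rightarrow> ('a \<Rightarrow> real) \<Rightarrow> 'a \<Rightarrow> real" where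
  "WMMS N M V s i =
     Max ((\<lambda>p. Min ((\<lambda>k. (\<Sum>j\<in>{j\<in>M. p j = k}. V i j) * (s i / s k)) ` N)) ` (M \<rightarrow>\<^sub>E N))"

definition alpha_star :: "'a set \<Rightarrow> 'b set \<Rightarrow> ('a \<Rightarrow> 'b \<Rightarrow> real) \<Rightarrow> ('a \<Rightarrow> real) \<Rightarrow> real" where
  "alpha_star N M V s = Inf {\<alpha>. \<alpha> \<ge> 1 \<and>
     (\<exists>x :: 'a \<Rightarrow> 'b \<Rightarrow> real.
        (\<forall>i\<in>N. \<forall>j\<in>M. x i j \<in> {0, 1}) \<and>
        (\<forall>j\<in>M. (\<Sum>i\<in>N. x i j) = 1) \<and>
        (\<forall>i\<in>N. (\<Sum>j\<in>M. V i j * x i j) \<ge> \<alpha> * WMMS N M V s i))}"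

definition Mi :: "'b set \<Rightarrow> ('a \<Rightarrow> 'b \<Rightarrow> real) \<Rightarrow> ('a \<Rightarrow> real) \<Rightarrow> 'a \<Rightarrow> 'b set" where
  "Mi M V t i = {j\<in>M. V i j \<ge> t i}"

definition Nj :: "'a set \<Rightarrow> 'b set \<Rightarrow> ('a \<Rightarrow> 'b \<Rightarrow> real) \<Rightarrow> ('a \<Rightarrow> real) \<Rightarrow> 'b \<Rightarrow> 'a set" where
  "Nj N M V t j = {i\<in>N. j \<in> Mi M V t i}"

definition P_feasible :: "'a set \<Rightarrow> 'b set \<Rightarrow> ('a \<Rightarrow> 'b \<Rightarrow> real) \<Rightarrow> ('a \<Rightarrow> real) \<Rightarrow> ('a \<Rightarrow> real) \<Rightarrow> bool" where
  "P_feasible N M V t w \<longleftrightarrow> (\<exists>x :: 'a \<Rightarrow> 'b \<Rightarrow> real.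
      (\<forall>i\<in>N. \<forall>j\<in>Mi M V t i. x i j \<ge> 0) \<and>
      (\<forall>i\<in>N. (\<Sum>j\<in>Mi M V t i. V i j * x i j) \<ge> w i) \<and>
      (\<forall>j\<in>M. (\<Sum>i\<in>Nj N M V t j. x i j) = 1))"

definition c_star :: "'a set \<Rightarrow> 'b set \<Rightarrow> ('a \<Rightarrow> 'b \<Rightarrow> real) \<Rightarrow> ('a \<Rightarrow> real) \<Rightarrow> real" where
  "c_star N M V s = Inf {c. c \<ge> 0 \<and>
     P_feasible N M V (\<lambda>i. c * WMMS N M V s i) (\<lambda>i. c * WMMS N M V s i)}"

end

theory Submission
  imports Defs
begin

text \<open>Every WMMS value is negative, so any integral allocation meets all guarantees for a large
  enough ratio and the set defining \<open>alpha_star\<close> is nonempty. Given such an allocation \<open>x\<close> with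
  ratio \<open>\<alpha>\<close>, put \<open>t\<^sub>i = w\<^sub>i = \<alpha> WMMS\<^sub>i\<close>. As valuations are nonpositive, an agent's bundle is
  worth at most any single chore in it, so \<open>x\<close> gives agent \<open>i\<close> only chores of \<open>M\<^sub>i\<close> and is
  itself a feasible point of P. Thus every ratio attained by the integer program is an admissible
  \<open>c\<close>, and the infima compare accordingly.\<close>

lemma sum_le_member_of_nonpos:
  fixes f :: "'a \<Rightarrow> 'b::ordered_ab_group_add"
  assumes "finite A" and "i \<in> A" and "\<And>x. x \<in> A \<Longrightarrow> f x \<le> 0"
  shows "sum f A \<le> f i"
proof -
  have "sum f A = f i + sum f (A - {i})"
    using assms by (simp add: sum.remove)
  moreover have "sum f (A - {i}) \<le> 0"
    using assms by (intro sum_nonpos) auto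
  ultimately show ?thesis by simp
qed

lemma exists_negative_bundle:
  fixes f :: "'b \<Rightarrow> real"
  assumes "finite N" and "finite M" and "p \<in> M \<rightarrow>\<^sub>E N" and "sum f M < 0"
  shows "\<exists>k\<in>N. (\<Sum>j\<in>{j\<in>M. p j = k}. f j) < 0"
proof (rule ccontr)
  assume "\<not> ?thesis"
  then have "0 \<le> (\<Sum>j\<in>{j\<in>M. p j = k}. f j)" if "k \<in> N" for k
    using that by (simp add: not_less)
  then have "0 \<le> (\<Sum>k\<in>N. \<Sum>j\<in>{j\<in>M. p j = k}. f j)"
    by (rule sum_nonneg)
  also have "\<dots> = sum f M"
    using sum.group[OF assms(2,1), of p f] assms(3) by (auto simp: PiE_iff)
  finally show False using assms(4) by simp
qed

lemma WMMS_negative: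
  assumes "finite N" and "N \<noteq> {}" and "finite M"
    and total: "(\<Sum>j\<in>M. V i j) = -1"
    and shares: "\<And>k. k \<in> N \<Longrightarrow> 0 < s k"
    and "i \<in> N"
  shows "WMMS N M V s i < 0"
proof -
  have "Min ((\<lambda>k. (\<Sum>j\<in>{j\<in>M. p j = k}. V i j) * (s i / s k)) ` N) < 0"
    if p: "p \<in> M \<rightarrow>\<^sub>E N" for p
  proof -
    obtain k where k: "k \<in> N" and neg: "(\<Sum>j\<in>{j\<in>M. p j = k}. V i j) < 0"
      using exists_negative_bundle[OF assms(1,3) p, where f = "V i"] total by auto
    have "Min ((\<lambda>k. (\<Sum>j\<in>{j\<in>M. p j = k}. V i j) * (s i / s k)) ` N)
        \<le> (\<Sum>j\<in>{j\<in>M. p j = k}. V i j) * (s i / s k)"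
      using assms(1) k by (intro Min_le) auto
    also have "\<dots> < 0"
      using neg shares[OF \<open>i \<in> N\<close>] shares[OF k] by (intro mult_neg_pos divide_pos_pos)
    finally show ?thesis .
  qed
  moreover have "finite (M \<rightarrow>\<^sub>E N)" and "M \<rightarrow>\<^sub>E N \<noteq> {}"
    using assms by (simp_all add: finite_PiE PiE_eq_empty_iff)
  ultimately show ?thesis
    unfolding WMMS_def by (subst Max_less_iff) auto
qed

lemma exists_feasible_ratio:
  assumes "finite N" and "i\<^sub>0 \<in> N"
    and total: "\<And>i. i \<in> N \<Longrightarrow> (\<Sum>j\<in>M. V i j) = -1"
    and neg: "\<And>i. i \<in> N \<Longrightarrow> b i < 0"
  shows "\<exists>\<alpha>\<ge>1. \<exists>x :: 'a \<Rightarrow> 'b \<Rightarrow> real.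
           (\<forall>i\<in>N. \<forall>j\<in>M. x i j \<in> {0, 1}) \<and>
           (\<forall>j\<in>M. (\<Sum>i\<in>N. x i j) = 1) \<and>
           (\<forall>i\<in>N. \<alpha> * b i \<le> (\<Sum>j\<in>M. V i j * x i j))"
proof (intro exI conjI ballI)
  define \<alpha> where "\<alpha> = max 1 (Max ((\<lambda>i. -1 / b i) ` N))"
  define x :: "'a \<Rightarrow> 'b \<Rightarrow> real" where "x = (\<lambda>i j. if i = i\<^sub>0 then 1 else 0)"
  show "1 \<le> \<alpha>" unfolding \<alpha>_def by simp
  show "x i j \<in> {0, 1}" for i j by (simp add: x_def)
  show "(\<Sum>i\<in>N. x i j) = 1" for j using assms(1,2) by (simp add: x_def)
  fix i assume i: "i \<in> N"
  have "-1 / b i \<le> \<alpha>"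
    unfolding \<alpha>_def using assms(1) i by (intro max.coboundedI2 Max_ge) auto
  then have "\<alpha> * b i \<le> (-1 / b i) * b i"
    using neg[OF i] by (intro mult_right_mono_neg) auto
  also have "\<dots> = -1" using neg[OF i] by simp
  also have "-1 \<le> (\<Sum>j\<in>M. V i j * x i j)"
    using total[OF i] by (cases "i = i\<^sub>0") (simp_all add: x_def)
  finally show "\<alpha> * b i \<le> (\<Sum>j\<in>M. V i j * x i j)" .
qed

lemma integral_bundle_value_le_chore:
  fixes x :: "'a \<Rightarrow> 'b \<Rightarrow> real"
  assumes "finite M" and "j \<in> M" and "x i j = 1"
    and "\<And>j. j \<in> M \<Longrightarrow> V i j \<le> 0"
    and "\<And>j. j \<in> M \<Longrightarrow> x i j \<in> {0, 1}"
  shows "(\<Sum>j\<in>M. V i j * x i j) \<le> V i j"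
proof -
  have "V i j' * x i j' \<le> 0" if "j' \<in> M" for j'
    using assms(4,5)[OF that] by auto
  then have "(\<Sum>j\<in>M. V i j * x i j) \<le> V i j * x i j"
    using assms(1,2) by (intro sum_le_member_of_nonpos)
  then show ?thesis using assms(3) by simp
qed

lemma P_feasible_of_integral_allocation:
  fixes x :: "'a \<Rightarrow> 'b \<Rightarrow> real"
  assumes "finite N" and "finite M"
    and "\<And>i j. i \<in> N \<Longrightarrow> j \<in> M \<Longrightarrow> V i j \<le> 0"
    and integral: "\<forall>i\<in>N. \<forall>j\<in>M. x i j \<in> {0, 1}"
    and assigned: "\<forall>j\<in>M. (\<Sum>i\<in>N. x i j) = 1"
    and guarantee: "\<forall>i\<in>N. t i \<le> (\<Sum>j\<in>M. V i j * x i j)"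
  shows "P_feasible N M V t t"
proof -
  have outside_Mi: "x i j = 0" if "i \<in> N" "j \<in> M" "j \<notin> Mi M V t i" for i j
  proof (rule ccontr)
    assume "x i j \<noteq> 0"
    with integral that have "x i j = 1" by auto
    with that have "(\<Sum>j\<in>M. V i j * x i j) \<le> V i j"
      using assms by (intro integral_bundle_value_le_chore) auto
    with guarantee that show False by (fastforce simp: Mi_def)
  qed
  have Mi_subset: "Mi M V t i \<subseteq> M" for i by (auto simp: Mi_def)
  show ?thesis unfolding P_feasible_def
  proof (intro exI[of _ x] conjI ballI)
    fix i j assume "i \<in> N" "j \<in> Mi M V t i"
    then show "0 \<le> x i j" using integral Mi_subset by fastforce
  next
    fix i assume i: "i \<in> N"
    have "(\<Sum>j\<in>Mi M V t i. V i j * x i j) = (\<Sum>j\<in>M. V i j * x i j)"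
      using assms(2) Mi_subset outside_Mi i by (intro sum.mono_neutral_left) auto
    then show "t i \<le> (\<Sum>j\<in>Mi M V t i. V i j * x i j)" using guarantee i by simp
  next
    fix j assume j: "j \<in> M"
    have "(\<Sum>i\<in>Nj N M V t j. x i j) = (\<Sum>i\<in>N. x i j)"
      using assms(1) outside_Mi j by (intro sum.mono_neutral_left) (auto simp: Nj_def)
    then show "(\<Sum>i\<in>Nj N M V t j. x i j) = 1" using assigned j by simp
  qed
qed

theorem lemma6:
  fixes N :: "'a set" and M :: "'b set"
    and V :: "'a \<Rightarrow> 'b \<Rightarrow> real" and s :: "'a \<Rightarrow> real"
  assumes "finite N" and "N \<noteq> {}" and "finite M"
    and "\<And>i j. i \<in> N \<Longrightarrow> j \<in> M \<Longrightarrow> V i j \<le> 0"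
    and "\<And>i. i \<in> N \<Longrightarrow> (\<Sum>j\<in>M. V i j) = -1"
    and "\<And>i. i \<in> N \<Longrightarrow> 0 < s i \<and> s i \<le> 1"
    and "(\<Sum>i\<in>N. s i) = 1"
  shows "alpha_star N M V s \<ge> c_star N M V s"
  unfolding alpha_star_def c_star_def
proof (rule cInf_superset_mono, goal_cases)
  case 1
  obtain i\<^sub>0 where i\<^sub>0: "i\<^sub>0 \<in> N" using assms(2) by blast
  have W_neg: "WMMS N M V s i < 0" if "i \<in> N" for i
    using assms(6) that by (intro WMMS_negative[OF assms(1-3,5)]) auto
  have "\<exists>\<alpha>\<ge>1. \<exists>x :: 'a \<Rightarrow> 'b \<Rightarrow> real.
      (\<forall>i\<in>N. \<forall>j\<in>M. x i j \<in> {0, 1}) \<and> (\<forall>j\<in>M. (\<Sum>i\<in>N. x i j) = 1) \<and>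
      (\<forall>i\<in>N. \<alpha> * WMMS N M V s i \<le> (\<Sum>j\<in>M. V i j * x i j))"
    using assms(1) i\<^sub>0 assms(5) W_neg by (rule exists_feasible_ratio)
  then show ?case by blast
next
  case 2
  show ?case by (rule bdd_belowI[of _ 0]) simp
next
  case 3
  show ?case
    using P_feasible_of_integral_allocation[OF assms(1,3,4)] by (auto simp del: insert_iff)
qed

end
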